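(* Every $3$-fine curve is a circle.
   Context: For nonzero plane vectors $u,v$, $\angle(u,v)\in\mathbb{R}/2\pi\mathbb{Z}$ is the counterclockwise angle from $u$ to $v$. A framed $n$-gon is a tuple $(B_1,\dots,B_n;u_1,\dots,u_n)$ of points $B_i$ in the plane with $B_i\neq B_{i+1}$ and unit vectors $u_i$ satisfying $\angle(u_i,B_{i+1}-B_i)=\angle(B_{i+1}-B_i,u_{i+1})$ for all $i$ (indices mod $n$); $(u_i)$ and $(-u_i)$ are identified. An $n$-fine curve ($n\ge3$) is an oriented closed plane curve $\gamma$ with a one-parameter family of inscribed $n$-gons $B(t)=(B_1(t),\dots,B_n(t))$, $B_j(t)\in\gamma$, such that $(B_1(t),\dots,B_n(t);T_1(t),\dots,T_n(t))$ is a framed $n$-gon, where $T_j(t)$ is the positive unit tangent vector of $\gamma$ at $B_j(t)$, and: (1) each velocity $B_j'(t)$ points in the positive direction of $\gamma$ for all $t,j$; (2) $B_j(t+1)=B_{j+1}(t)$ for all $t,j$; (3) the tangent lines to $\gamma$ at $B_j(t)$ and $B_{j+1}(t)$ are not parallel for all $t,j$. Families are considered up to reparametrization. *)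

theory Defs
  imports "HOL-Analysis.Analysis"
begin

text \<open>Plane = complex numbers. Counterclockwise angle from u to v, as a representative
  in (-pi, pi] of the class in R/2piZ.\<close>
definition ccw_angle :: "complex \<Rightarrow> complex \<Rightarrow> real" where
  "ccw_angle u v = Arg (v / u)"

definition angle_eq_mod :: "real \<Rightarrow> real \<Rightarrow> bool" where
  "angle_eq_mod a b \<longleftrightarrow> (\<exists>k::int. a - b = 2 * pi * of_int k)"

definition framed_ngon :: "nat \<Rightarrow> (nat \<Rightarrow> complex) \<Rightarrow> (nat \<Rightarrow> complex) \<Rightarrow> bool" where
  "framed_ngon n B u \<longleftrightarrow>
     (\<forall>i<n. B i \<noteq> B ((i + 1) mod n) \<and> norm (u i) = 1 \<and>
        angle_eq_mod (ccw_angle (u i) (B ((i + 1) mod n) - B i))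
                     (ccw_angle (B ((i + 1) mod n) - B i) (u ((i + 1) mod n))))"

definition vderiv :: "(real \<Rightarrow> complex) \<Rightarrow> real \<Rightarrow> complex" where
  "vderiv f = (\<lambda>t. vector_derivative f (at t))"

text \<open>Smooth, regular, closed, oriented plane curve with period L > 0
  (orientation = direction of increasing parameter).\<close>
definition smooth_closed_regular_curve :: "(real \<Rightarrow> complex) \<Rightarrow> real \<Rightarrow> bool" where
  "smooth_closed_regular_curve \<gamma> L \<longleftrightarrow>
     L > 0 \<and> (\<forall>t. \<gamma> (t + L) = \<gamma> t) \<and>
     (\<forall>k t. (vderiv ^^ k) \<gamma> differentiable (at t)) \<and>
     (\<forall>t. vderiv \<gamma> t \<noteq> 0)"

definition unit_tangent :: "(real \<Rightarrow> complex) \<Rightarrow> real \<Rightarrow> complex" where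
  "unit_tangent \<gamma> x = vderiv \<gamma> x / complex_of_real (norm (vderiv \<gamma> x))"

text \<open>The inscribed family is given by parameter lifts s j (j < n):
  B_j(t) = \<gamma>(s j t). Condition (1): s j has positive derivative (so B_j' is a positive
  multiple of the positive tangent). Condition (2): B_j(t+1) = B_{j+1}(t), as points of the
  curve, i.e. equal parameters modulo the period.\<close>
definition n_fine_curve :: "nat \<Rightarrow> (real \<Rightarrow> complex) \<Rightarrow> real \<Rightarrow> bool" where
  "n_fine_curve n \<gamma> L \<longleftrightarrow>
     n \<ge> 3 \<and> smooth_closed_regular_curve \<gamma> L \<and>
     (\<exists>s :: nat \<Rightarrow> real \<Rightarrow> real.
        (\<forall>t. framed_ngon n (\<lambda>j. \<gamma> (s j t)) (\<lambda>j. unit_tangent \<gamma> (s j t))) \<and>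
        (\<forall>j<n. \<forall>t. \<exists>d>0. (s j has_real_derivative d) (at t)) \<and>
        (\<forall>j<n. \<forall>t. \<exists>k::int. s j (t + 1) = s ((j + 1) mod n) t + of_int k * L) \<and>
        (\<forall>j<n. \<forall>t. \<not> (\<exists>c::real. unit_tangent \<gamma> (s ((j + 1) mod n) t)
                                   = complex_of_real c * unit_tangent \<gamma> (s j t))))"

end

theory Submission
  imports Defs
begin

text \<open>At an edge \<open>d\<close> of a framed polygon the frame condition says that \<open>d\<close> bisects the frame
  vectors \<open>u\<close>, \<open>v\<close> at its ends, i.e. \<open>d\<^sup>2 / |d|\<^sup>2 = u v\<close>. For a triangle with non-parallel
  frame vectors this forces the vertices to be non-collinear and the frame vectors to be tangent to
  the circumcircle. Moving the inscribed triangle along a 3-fine curve, each vertex therefore moves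
  tangentially to the circumcircle; differentiating the equality of the three radii shows that the
  circumcentre is stationary, and then so is the radius. One vertex sweeps the whole closed curve,
  which hence lies on a fixed circle, and a regular closed curve on a circle covers it: otherwise a
  Cayley transform would turn it into a periodic real function without critical points.\<close>

lemma framed_edge_square:
  fixes u v d :: complex
  assumes "norm u = 1" "norm v = 1" "d \<noteq> 0"
    and "angle_eq_mod (ccw_angle u d) (ccw_angle d v)"
  shows "d * d = d * cnj d * (u * v)"
proof -
  have "u \<noteq> 0" "v \<noteq> 0"
    using assms by auto
  obtain k :: int where k: "Arg (d / u) = Arg (v / d) + of_int (2 * k) * pi"
    using assms(4) unfolding angle_eq_mod_def ccw_angle_def by (auto simp: algebra_simps)
  have "\<i> * Arg (d / u) = \<i> * Arg (v / d) + of_int (2 * k) * pi * \<i>"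
    unfolding k by (simp add: algebra_simps)
  then have same_dir: "exp (\<i> * Arg (d / u)) = exp (\<i> * Arg (v / d))"
    unfolding exp_eq by blast
  have "d / u = of_real (cmod d) * exp (\<i> * Arg (d / u))"
    using Arg_eq[of "d / u"] assms \<open>u \<noteq> 0\<close> by (simp add: norm_divide)
  moreover have "v / d = of_real (1 / cmod d) * exp (\<i> * Arg (v / d))"
    using Arg_eq[of "v / d"] assms \<open>v \<noteq> 0\<close> by (simp add: norm_divide)
  ultimately have "d / u = of_real ((cmod d)\<^sup>2) * (v / d)"
    using same_dir \<open>d \<noteq> 0\<close> by (simp add: power2_eq_square field_simps)
  then have "d * d = of_real ((cmod d)\<^sup>2) * (u * v)"
    using \<open>u \<noteq> 0\<close> \<open>d \<noteq> 0\<close> by (simp add: field_simps)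
  then show ?thesis
    by (simp only: complex_norm_square)
qed

lemma framed_triangle_edges:
  assumes "framed_ngon 3 b u"
  shows "norm (u 0) = 1" "norm (u 1) = 1" "norm (u 2) = 1"
    and "b 1 \<noteq> b 0" "b 2 \<noteq> b 1" "b 0 \<noteq> b 2"
    and "(b 1 - b 0) * (b 1 - b 0) = (b 1 - b 0) * cnj (b 1 - b 0) * (u 0 * u 1)"
    and "(b 2 - b 1) * (b 2 - b 1) = (b 2 - b 1) * cnj (b 2 - b 1) * (u 1 * u 2)"
    and "(b 0 - b 2) * (b 0 - b 2) = (b 0 - b 2) * cnj (b 0 - b 2) * (u 2 * u 0)"
proof -
  have edge: "b i \<noteq> b ((i + 1) mod 3) \<and> norm (u i) = 1 \<and>
      angle_eq_mod (ccw_angle (u i) (b ((i + 1) mod 3) - b i))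
                   (ccw_angle (b ((i + 1) mod 3) - b i) (u ((i + 1) mod 3)))" if "i < 3" for i
    using assms that unfolding framed_ngon_def by blast
  have succ: "((0::nat) + 1) mod 3 = 1" "((1::nat) + 1) mod 3 = 2" "((2::nat) + 1) mod 3 = 0"
    by simp_all
  have e0: "b 0 \<noteq> b 1" "norm (u 0) = 1"
      "angle_eq_mod (ccw_angle (u 0) (b 1 - b 0)) (ccw_angle (b 1 - b 0) (u 1))"
    using edge[of 0] unfolding succ by auto
  have e1: "b 1 \<noteq> b 2" "norm (u 1) = 1"
      "angle_eq_mod (ccw_angle (u 1) (b 2 - b 1)) (ccw_angle (b 2 - b 1) (u 2))"
    using edge[of 1] unfolding succ by auto
  have e2: "b 2 \<noteq> b 0" "norm (u 2) = 1"
      "angle_eq_mod (ccw_angle (u 2) (b 0 - b 2)) (ccw_angle (b 0 - b 2) (u 0))"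
    using edge[of 2] unfolding succ by auto
  show "norm (u 0) = 1" "norm (u 1) = 1" "norm (u 2) = 1"
    and "b 1 \<noteq> b 0" "b 2 \<noteq> b 1" "b 0 \<noteq> b 2"
    using e0 e1 e2 by auto
  show "(b 1 - b 0) * (b 1 - b 0) = (b 1 - b 0) * cnj (b 1 - b 0) * (u 0 * u 1)"
    by (rule framed_edge_square[OF e0(2) e1(2) _ e0(3)]) (use e0(1) in auto)
  show "(b 2 - b 1) * (b 2 - b 1) = (b 2 - b 1) * cnj (b 2 - b 1) * (u 1 * u 2)"
    by (rule framed_edge_square[OF e1(2) e2(2) _ e1(3)]) (use e1(1) in auto)
  show "(b 0 - b 2) * (b 0 - b 2) = (b 0 - b 2) * cnj (b 0 - b 2) * (u 2 * u 0)"
    by (rule framed_edge_square[OF e2(2) e0(2) _ e2(3)]) (use e2(1) in auto)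
qed

text \<open>The circumcentre in complex coordinates relative to \<open>a\<close>; the denominator is
  \<open>2 \<i> Im (cnj (b - a) * (z - a))\<close>, which vanishes exactly for collinear points.\<close>
definition circumcenter :: "complex \<Rightarrow> complex \<Rightarrow> complex \<Rightarrow> complex" where
  "circumcenter a b z = a +
     ((b - a) * cnj (b - a) * (z - a) - (z - a) * cnj (z - a) * (b - a)) /
     (cnj (b - a) * (z - a) - (b - a) * cnj (z - a))"

lemma circumcenter_denominator_nonzero:
  assumes "Im (cnj (b - a) * (z - a)) \<noteq> 0"
  shows "cnj (b - a) * (z - a) - (b - a) * cnj (z - a) \<noteq> 0"
proof
  assume "cnj (b - a) * (z - a) - (b - a) * cnj (z - a) = 0"
  then have "Im (cnj (b - a) * (z - a) - (b - a) * cnj (z - a)) = 0"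
    by simp
  then show False
    using assms by (simp add: algebra_simps)
qed

lemma circumcenter_commute: "circumcenter a b z = circumcenter a z b"
proof -
  have "\<And>n d :: complex. n / d = (- n) / (- d)"
    by simp
  then show ?thesis
    unfolding circumcenter_def by (metis minus_diff_eq mult.commute)
qed

lemma circumcenter_equidistant_second:
  assumes "Im (cnj (b - a) * (z - a)) \<noteq> 0"
  defines "c \<equiv> circumcenter a b z"
  shows "(b - c) * cnj (b - c) = (a - c) * cnj (a - c)"
proof -
  define p q where "p = b - a" and "q = z - a"
  have D: "cnj p * q - p * cnj q \<noteq> 0"
    using circumcenter_denominator_nonzero[OF assms(1)] unfolding p_def q_def .
  then have D': "p * cnj q - cnj p * q \<noteq> 0"
    by (metis eq_iff_diff_eq_0)
  define x where "x = (p * cnj p * q - q * cnj q * p) / (cnj p * q - p * cnj q)"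
  have "cnj x = (cnj p * p * cnj q - cnj q * q * cnj p) / (p * cnj q - cnj p * q)"
    unfolding x_def by simp
  then have "x * cnj x = (x - p) * cnj (x - p)"
    unfolding x_def using D D' by (simp add: field_simps)
  moreover have "c = a + x"
    unfolding c_def circumcenter_def x_def p_def q_def ..
  ultimately show ?thesis
    unfolding p_def by (simp add: algebra_simps)
qed

lemma circumcenter_equidistant:
  assumes "Im (cnj (b - a) * (z - a)) \<noteq> 0"
  defines "c \<equiv> circumcenter a b z"
  shows "(b - c) * cnj (b - c) = (a - c) * cnj (a - c)"
    and "(z - c) * cnj (z - c) = (a - c) * cnj (a - c)"
proof -
  show "(b - c) * cnj (b - c) = (a - c) * cnj (a - c)"
    unfolding c_def by (rule circumcenter_equidistant_second[OF assms(1)])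
  have "Im (cnj (z - a) * (b - a)) \<noteq> 0"
    using assms(1) by (simp add: algebra_simps)
  then show "(z - c) * cnj (z - c) = (a - c) * cnj (a - c)"
    unfolding c_def circumcenter_commute[of a b z] by (rule circumcenter_equidistant_second)
qed

lemma edge_square_of_real_scale_cancel:
  assumes "\<mu> \<noteq> 0"
    and "(of_real \<mu> * p) * (of_real \<mu> * p) = (of_real \<mu> * p) * cnj (of_real \<mu> * p) * w"
  shows "p * p = p * cnj p * w"
proof -
  have "of_real (\<mu> * \<mu>) * (p * p) = of_real (\<mu> * \<mu>) * (p * cnj p * w)"
    using assms(2) by (simp add: algebra_simps)
  then show ?thesis
    using assms(1) by simp
qed

text \<open>On a line all three edges are parallel, which forces \<open>u 0 * u 1 = u 1 * u 2 = u 2 * u 0\<close>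
  and hence \<open>u 0 = u 1 = u 2\<close>.\<close>
lemma framed_triangle_noncollinear:
  fixes b u :: "nat \<Rightarrow> complex"
  assumes "framed_ngon 3 b u" "u 1 \<noteq> u 0"
  shows "Im (cnj (b 1 - b 0) * (b 2 - b 0)) \<noteq> 0"
proof
  note edges = framed_triangle_edges[OF assms(1)]
  assume "Im (cnj (b 1 - b 0) * (b 2 - b 0)) = 0"
  define p where "p = b 1 - b 0"
  have "p \<noteq> 0"
    using edges(4) unfolding p_def by simp
  then have p_sq: "p * cnj p \<noteq> 0"
    by simp
  obtain r where r: "cnj p * (b 2 - b 0) = of_real r"
    using \<open>Im _ = 0\<close> unfolding p_def by (metis complex_is_Real_iff of_real_Re)
  define k where "k = r / (cmod p)\<^sup>2"
  have "of_real ((cmod p)\<^sup>2) * (b 2 - b 0) = p * (cnj p * (b 2 - b 0))"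
    by (simp only: complex_norm_square mult.assoc)
  also have "\<dots> = p * of_real r"
    by (simp only: r)
  finally have "of_real ((cmod p)\<^sup>2) * (b 2 - b 0) = p * of_real r" .
  then have b2: "b 2 - b 0 = of_real k * p"
    unfolding k_def using \<open>p \<noteq> 0\<close> by (simp add: field_simps)
  have "k \<noteq> 0" "k - 1 \<noteq> 0"
    using b2 edges(5,6) unfolding p_def by (auto simp: algebra_simps)
  have "b 2 - b 1 = of_real (k - 1) * p" "b 0 - b 2 = of_real (- k) * p"
    using b2 unfolding p_def by (simp_all add: algebra_simps)
  then have "p * p = p * cnj p * (u 1 * u 2)" "p * p = p * cnj p * (u 2 * u 0)"
    using edge_square_of_real_scale_cancel[OF \<open>k - 1 \<noteq> 0\<close>, of p "u 1 * u 2"]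
      edge_square_of_real_scale_cancel[of "- k" p "u 2 * u 0"] \<open>k \<noteq> 0\<close> edges(8,9)
    by simp_all
  moreover have "p * p = p * cnj p * (u 0 * u 1)"
    using edges(7) unfolding p_def .
  ultimately have "u 0 * u 1 = u 1 * u 2" "u 1 * u 2 = u 2 * u 0"
    using p_sq by (metis mult_left_cancel)+
  moreover have "u 1 \<noteq> 0" "u 2 \<noteq> 0"
    using edges(2,3) by auto
  ultimately show False
    using assms(2) by (metis mult.commute mult_left_cancel)
qed

lemma chord_endpoints_product:
  fixes w0 w1 u0 u1 :: complex and R :: real
  assumes "w0 * cnj w0 = R" "w1 * cnj w1 = R" "R \<noteq> 0" "w1 \<noteq> w0"
    and "(w1 - w0) * (w1 - w0) = (w1 - w0) * cnj (w1 - w0) * (u0 * u1)"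
  shows "w0 * w1 = - R * (u0 * u1)"
proof -
  have "w0 \<noteq> 0" "w1 \<noteq> 0"
    using assms(1-3) by auto
  have "w1 - w0 = cnj (w1 - w0) * (u0 * u1)"
    using assms(4,5) by (metis eq_iff_diff_eq_0 mult.assoc mult_left_cancel)
  also have "cnj (w1 - w0) = R / w1 - R / w0"
    using assms(1,2) \<open>w0 \<noteq> 0\<close> \<open>w1 \<noteq> 0\<close> by (simp add: field_simps)
  finally have "(w1 - w0) * (w0 * w1 + R * (u0 * u1)) = 0"
    using \<open>w0 \<noteq> 0\<close> \<open>w1 \<noteq> 0\<close> by (simp add: field_simps)
  then show ?thesis
    using assms(4) by (simp add: add_eq_0_iff)
qed

text \<open>From the three products, \<open>(u0 / w0)\<^sup>2 = -1 / R\<close>, so \<open>u0\<close> is an imaginary multiple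
  of the radius vector \<open>w0\<close>.\<close>
lemma tangent_from_chord_products:
  fixes w0 w1 w2 u0 u1 u2 :: complex and R :: real
  assumes "w0 * w1 = - R * (u0 * u1)" "w1 * w2 = - R * (u1 * u2)" "w2 * w0 = - R * (u2 * u0)"
    and "R > 0" "w0 \<noteq> 0" "w1 \<noteq> 0" "w2 \<noteq> 0"
  shows "Re (w0 * cnj u0) = 0"
proof -
  define \<delta> where "\<delta> = u0 / w0"
  have R: "complex_of_real R \<noteq> 0"
    using assms(4) by simp
  have "u0 * u1 = - (w0 * w1) / R" "u1 * u2 = - (w1 * w2) / R" "u2 * u0 = - (w2 * w0) / R"
    using assms(1-3) R by (simp_all add: field_simps)
  moreover have "u0 * u0 * (u1 * u2) = (u0 * u1) * (u2 * u0)"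
    by (simp add: algebra_simps)
  ultimately have "u0 * u0 * (- (w1 * w2)) * R = (w0 * w0) * (w1 * w2)"
    using R by (simp add: field_simps)
  then have "(u0 * u0 * R + w0 * w0) * (w1 * w2) = 0"
    by algebra
  then have "u0 * u0 * R = - (w0 * w0)"
    using assms(6,7) by (simp add: add_eq_0_iff)
  then have "\<delta> * \<delta> = - 1 / R"
    unfolding \<delta>_def using assms(4,5) by (simp add: field_simps)
  then have "Re (\<delta> * \<delta>) < 0" "Im (\<delta> * \<delta>) = 0"
    using assms(4) by simp_all
  then have "Re \<delta> = 0"
    by (simp add: power2_eq_square) (smt (verit) mult_eq_0_iff zero_le_square)
  have "w0 * cnj u0 = (w0 * cnj w0) * cnj \<delta>"
    unfolding \<delta>_def using assms(5) by (simp add: field_simps)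
  also have "w0 * cnj w0 = of_real ((cmod w0)\<^sup>2)"
    by (rule complex_norm_square[symmetric])
  finally show ?thesis
    using \<open>Re \<delta> = 0\<close> by simp
qed

lemma framed_triangle_circumcircle_tangent:
  fixes b u :: "nat \<Rightarrow> complex"
  assumes "framed_ngon 3 b u" "u 1 \<noteq> u 0" "j < 3"
  shows "Re ((b j - circumcenter (b 0) (b 1) (b 2)) * cnj (u j)) = 0"
proof -
  note edges = framed_triangle_edges[OF assms(1)]
  note noncollinear = framed_triangle_noncollinear[OF assms(1,2)]
  define w where "w = (\<lambda>j. b j - circumcenter (b 0) (b 1) (b 2))"
  define R where "R = (cmod (w 0))\<^sup>2"
  have on_circle: "w 0 * cnj (w 0) = R" "w 1 * cnj (w 1) = R" "w 2 * cnj (w 2) = R"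
    using circumcenter_equidistant[OF noncollinear]
    unfolding w_def R_def complex_norm_square by simp_all
  have "w 1 \<noteq> w 0" "w 2 \<noteq> w 1" "w 0 \<noteq> w 2"
    using edges(4-6) unfolding w_def by auto
  then have "R \<noteq> 0"
    using on_circle by auto
  then have "R > 0" "w 0 \<noteq> 0" "w 1 \<noteq> 0" "w 2 \<noteq> 0"
    using on_circle unfolding R_def by auto
  have "w 1 - w 0 = b 1 - b 0" "w 2 - w 1 = b 2 - b 1" "w 0 - w 2 = b 0 - b 2"
    unfolding w_def by simp_all
  then have "w 0 * w 1 = - R * (u 0 * u 1)" "w 1 * w 2 = - R * (u 1 * u 2)"
      "w 2 * w 0 = - R * (u 2 * u 0)"
    using chord_endpoints_product[OF on_circle(1,2) \<open>R \<noteq> 0\<close> \<open>w 1 \<noteq> w 0\<close>]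
      chord_endpoints_product[OF on_circle(2,3) \<open>R \<noteq> 0\<close> \<open>w 2 \<noteq> w 1\<close>]
      chord_endpoints_product[OF on_circle(3,1) \<open>R \<noteq> 0\<close> \<open>w 0 \<noteq> w 2\<close>] edges(7-9)
    by simp_all
  then have "Re (w 0 * cnj (u 0)) = 0" "Re (w 1 * cnj (u 1)) = 0" "Re (w 2 * cnj (u 2)) = 0"
    using tangent_from_chord_products \<open>R > 0\<close> \<open>w 0 \<noteq> 0\<close> \<open>w 1 \<noteq> 0\<close> \<open>w 2 \<noteq> 0\<close>
    by blast+
  moreover have "j = 0 \<or> j = 1 \<or> j = 2"
    using assms(3) by auto
  ultimately show ?thesis
    unfolding w_def by auto
qed

lemma orthogonal_to_independent_imp_zero:
  fixes p q x :: complex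
  assumes "Re (p * cnj x) = 0" "Re (q * cnj x) = 0" "Im (cnj p * q) \<noteq> 0"
  shows "x = 0"
proof -
  have eqs: "Re p * Re x + Im p * Im x = 0" "Re q * Re x + Im q * Im x = 0"
    using assms(1,2) by simp_all
  have det: "Re p * Im q - Im p * Re q \<noteq> 0"
    using assms(3) by (simp add: algebra_simps)
  have "Re x * (Re p * Im q - Im p * Re q)
      = Im q * (Re p * Re x + Im p * Im x) - Im p * (Re q * Re x + Im q * Im x)"
    "Im x * (Re p * Im q - Im p * Re q)
      = Re p * (Re q * Re x + Im q * Im x) - Re q * (Re p * Re x + Im p * Im x)"
    by (simp_all add: algebra_simps)
  then have "Re x * (Re p * Im q - Im p * Re q) = 0" "Im x * (Re p * Im q - Im p * Re q) = 0"
    unfolding eqs by simp_all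
  then show ?thesis
    using det by (simp add: complex_eq_iff)
qed

lemma mult_cnj_eq_imp_norm_eq:
  fixes z w :: complex
  assumes "z * cnj z = w * cnj w"
  shows "cmod z = cmod w"
proof -
  have "(cmod z)\<^sup>2 = (cmod w)\<^sup>2"
    using assms unfolding complex_norm_square[symmetric] of_real_eq_iff .
  then show ?thesis
    by (simp add: power2_eq_iff_nonneg)
qed

lemma has_vector_derivative_mult_cnj:
  fixes f :: "real \<Rightarrow> complex"
  assumes "(f has_vector_derivative f') (at t)"
  shows "((\<lambda>\<tau>. f \<tau> * cnj (f \<tau>)) has_vector_derivative f t * cnj f' + f' * cnj (f t)) (at t)"
  using has_vector_derivative_mult[OF assms has_vector_derivative_cnj[OF assms]] by simp

text \<open>Differentiating \<open>|B j - c|\<^sup>2 = |B 0 - c|\<^sup>2\<close> kills the velocity terms of the vertices,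
  which are orthogonal to the radii, and leaves \<open>Re ((B j - B 0) * cnj c') = 0\<close>.\<close>
lemma circumcenter_stationary:
  fixes B :: "nat \<Rightarrow> real \<Rightarrow> complex"
  assumes deriv: "\<And>j. j < 3 \<Longrightarrow> (B j has_vector_derivative B' j) (at t)"
    and c: "(c has_vector_derivative c') (at t)"
    and equidistant:
      "\<And>j \<tau>. j < 3 \<Longrightarrow> (B j \<tau> - c \<tau>) * cnj (B j \<tau> - c \<tau>) = (B 0 \<tau> - c \<tau>) * cnj (B 0 \<tau> - c \<tau>)"
    and tangent: "\<And>j. j < 3 \<Longrightarrow> Re ((B j t - c t) * cnj (B' j)) = 0"
    and noncollinear: "Im (cnj (B 1 t - B 0 t) * (B 2 t - B 0 t)) \<noteq> 0"
  shows "c' = 0"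
proof -
  define D where "D j = (B j t - c t) * cnj (B' j - c') + (B' j - c') * cnj (B j t - c t)" for j
  have D_deriv: "((\<lambda>\<tau>. (B j \<tau> - c \<tau>) * cnj (B j \<tau> - c \<tau>)) has_vector_derivative D j) (at t)"
    if "j < 3" for j
    unfolding D_def by (intro has_vector_derivative_mult_cnj has_vector_derivative_diff deriv c that)
  have Re_D: "Re (D j) = - 2 * Re ((B j t - c t) * cnj c')" if "j < 3" for j
  proof -
    have "Re (D j) = 2 * Re ((B j t - c t) * cnj (B' j)) - 2 * Re ((B j t - c t) * cnj c')"
      unfolding D_def by (simp add: algebra_simps)
    then show ?thesis
      using tangent[OF that] by simp
  qed
  have orth: "Re ((B j t - B 0 t) * cnj c') = 0" if "j < 3" for j
  proof -
    have "(\<lambda>\<tau>. (B j \<tau> - c \<tau>) * cnj (B j \<tau> - c \<tau>)) = (\<lambda>\<tau>. (B 0 \<tau> - c \<tau>) * cnj (B 0 \<tau> - c \<tau>))"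
      using equidistant[OF that] by blast
    then have "D j = D 0"
      using vector_derivative_unique_at D_deriv[OF that] D_deriv[of 0] by fastforce
    then have "Re ((B j t - c t) * cnj c') = Re ((B 0 t - c t) * cnj c')"
      using Re_D[OF that] Re_D[of 0] by simp
    then show ?thesis
      by (simp add: algebra_simps)
  qed
  show ?thesis
    using orthogonal_to_independent_imp_zero[OF orth[of 1] orth[of 2] noncollinear] by simp
qed

lemma tangent_triangle_on_fixed_circle:
  fixes B :: "nat \<Rightarrow> real \<Rightarrow> complex"
  assumes deriv: "\<And>j t. j < 3 \<Longrightarrow> \<exists>B'. (B j has_vector_derivative B') (at t) \<and>
      Re ((B j t - circumcenter (B 0 t) (B 1 t) (B 2 t)) * cnj B') = 0"
    and noncollinear: "\<And>t. Im (cnj (B 1 t - B 0 t) * (B 2 t - B 0 t)) \<noteq> 0"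
  shows "\<exists>c r. r > 0 \<and> (\<forall>t. cmod (B 0 t - c) = r)"
proof -
  define c where "c t = circumcenter (B 0 t) (B 1 t) (B 2 t)" for t
  obtain B' where B': "\<And>j t. j < 3 \<Longrightarrow> (B j has_vector_derivative B' j t) (at t)"
      and tangent: "\<And>j t. j < 3 \<Longrightarrow> Re ((B j t - c t) * cnj (B' j t)) = 0"
    using deriv unfolding c_def by metis
  have equidistant:
      "(B j t - c t) * cnj (B j t - c t) = (B 0 t - c t) * cnj (B 0 t - c t)" if "j < 3" for j t
  proof -
    have "j = 0 \<or> j = 1 \<or> j = 2"
      using that by auto
    then show ?thesis
      using circumcenter_equidistant[OF noncollinear[of t]] unfolding c_def by auto
  qed
  have "c differentiable (at t)" for t
  proof -
    have B_diff: "B j differentiable (at t)" if "j < 3" for j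
      using B'[OF that] differentiableI_vector by blast
    then have cnj_diff: "(\<lambda>\<tau>. cnj (B j \<tau>)) differentiable (at t)" if "j < 3" for j
      using that differentiable_cnj_iff by blast
    show ?thesis
      unfolding c_def circumcenter_def
      using circumcenter_denominator_nonzero[OF noncollinear[of t]]
      by (auto intro!: derivative_intros B_diff cnj_diff)
  qed
  then have "(c has_vector_derivative 0) (at t)" for t
    using circumcenter_stationary[OF B' _ equidistant tangent noncollinear]
    by (metis vector_derivative_works)
  then obtain c0 where c0: "\<And>t. c t = c0"
    using has_vector_derivative_zero_constant[of UNIV c] by auto
  have "((\<lambda>\<tau>. (B 0 \<tau> - c0) * cnj (B 0 \<tau> - c0)) has_vector_derivative 0) (at t)" for t
  proof -
    have "(B 0 t - c0) * cnj (B' 0 t) + B' 0 t * cnj (B 0 t - c0) = 0"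
      using tangent[of 0 t] c0 by (simp add: complex_eq_iff algebra_simps)
    then show ?thesis
      using has_vector_derivative_mult_cnj[OF has_vector_derivative_diff[OF B'[of 0 t]
          has_vector_derivative_const[of c0]]] by simp
  qed
  then obtain K where "\<And>t. (B 0 t - c0) * cnj (B 0 t - c0) = K"
    using has_vector_derivative_zero_constant[of UNIV "\<lambda>\<tau>. (B 0 \<tau> - c0) * cnj (B 0 \<tau> - c0)"]
    by auto
  then have radius: "cmod (B 0 t - c0) = cmod (B 0 0 - c0)" for t
    by (metis mult_cnj_eq_imp_norm_eq)
  have "cmod (B 0 0 - c0) > 0"
  proof (rule ccontr)
    assume "\<not> cmod (B 0 0 - c0) > 0"
    then have "B 0 0 = c0" "B 1 0 = c0"
      using equidistant[of 1 0] c0 by auto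
    then show False
      using noncollinear[of 0] by simp
  qed
  then show ?thesis
    using radius by blast
qed

lemma periodic_shift_int:
  assumes "\<And>t. g (t + L) = g t"
  shows "g (x + of_int n * L) = g x"
proof (induction n rule: int_induct[where k = 0])
  case base
  show ?case
    by simp
next
  case (step1 i)
  have "g (x + of_int (i + 1) * L) = g ((x + of_int i * L) + L)"
    by (simp add: algebra_simps)
  then show ?case
    using assms step1.IH by simp
next
  case (step2 i)
  have "g (x + of_int (i - 1) * L) = g ((x + of_int (i - 1) * L) + L)"
    using assms by simp
  also have "\<dots> = g (x + of_int i * L)"
    by (simp add: algebra_simps)
  finally show ?case
    using step2.IH by simp
qed

lemma periodic_range_subset_image:
  fixes \<gamma> :: "real \<Rightarrow> 'a" and f :: "real \<Rightarrow> real"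
  assumes "L > 0" "\<And>t. \<gamma> (t + L) = \<gamma> t"
    and "a \<le> b" "continuous_on {a..b} f" "f a + L \<le> f b"
  shows "range \<gamma> \<subseteq> (\<lambda>\<tau>. \<gamma> (f \<tau>)) ` {a..b}"
proof
  fix z
  assume "z \<in> range \<gamma>"
  then obtain x where "z = \<gamma> x"
    by blast
  define n where "n = \<lfloor>(x - f a) / L\<rfloor>"
  define y where "y = x - of_int n * L"
  have "of_int n \<le> (x - f a) / L" "(x - f a) / L < of_int n + 1"
    unfolding n_def by linarith+
  then have "f a \<le> y" "y \<le> f b"
    using assms(1,5) unfolding y_def by (simp_all add: field_simps)
  then obtain \<tau> where "\<tau> \<in> {a..b}" "f \<tau> = y"
    using IVT'[of f a y b] assms(3,4) by auto
  moreover have "\<gamma> x = \<gamma> y"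
    using periodic_shift_int[of \<gamma> L y n, OF assms(2)] unfolding y_def by simp
  ultimately show "z \<in> (\<lambda>\<tau>. \<gamma> (f \<tau>)) ` {a..b}"
    using \<open>z = \<gamma> x\<close> by auto
qed

lemma periodic_has_critical_point:
  fixes f f' :: "real \<Rightarrow> real"
  assumes "L > 0" "\<And>t. f (t + L) = f t" "\<And>t. (f has_real_derivative f' t) (at t)"
  shows "\<exists>t. f' t = 0"
proof -
  have "continuous_on {0..L} f"
    using assms(3) DERIV_isCont continuous_at_imp_continuous_on by blast
  moreover have "f differentiable (at x)" for x
    using assms(3) real_differentiable_def by blast
  ultimately obtain t where "DERIV f t :> 0"
    using Rolle[where a = 0 and b = L and f = f] assms(1) assms(2)[of 0] by auto
  then show ?thesis
    using DERIV_unique assms(3) by blast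
qed

lemma Im_cayley_unit_circle:
  fixes z :: complex
  assumes "cmod z = 1" "z \<noteq> 1"
  shows "Im (\<i> * (1 + z) / (1 - z)) = 0"
proof -
  have "z \<noteq> 0" "1 - z \<noteq> 0" "z - 1 \<noteq> 0"
    using assms by auto
  moreover have "cnj z = 1 / z"
    using assms \<open>z \<noteq> 0\<close> complex_norm_square[of z] by (simp add: field_simps)
  ultimately have "cnj (\<i> * (1 + z) / (1 - z)) = \<i> * (1 + z) / (1 - z)"
    by (simp add: field_simps)
  then show ?thesis
    by (metis Reals_cnj_iff complex_is_Real_iff)
qed

text \<open>The Cayley transform \<open>z \<mapsto> \<i> (1 + z) / (1 - z)\<close> maps the punctured unit circle to the
  real line, so it turns such a curve into a periodic real function.\<close>
lemma periodic_unit_curve_omitting_1_stationary: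
  fixes \<phi> \<phi>' :: "real \<Rightarrow> complex"
  assumes "L > 0" "\<And>t. \<phi> (t + L) = \<phi> t" "\<And>t. (\<phi> has_vector_derivative \<phi>' t) (at t)"
    and "\<And>t. cmod (\<phi> t) = 1" "\<And>t. \<phi> t \<noteq> 1"
  shows "\<exists>t. \<phi>' t = 0"
proof -
  define g' where "g' t = \<phi>' t * (2 * \<i> / (1 - \<phi> t)\<^sup>2)" for t
  have g_deriv: "((\<lambda>t. \<i> * (1 + \<phi> t) / (1 - \<phi> t)) has_vector_derivative g' t) (at t)" for t
  proof -
    have "((\<lambda>z. \<i> * (1 + z) / (1 - z)) has_field_derivative 2 * \<i> / (1 - \<phi> t)\<^sup>2) (at (\<phi> t))"
      using assms(5)[of t] by (auto intro!: derivative_eq_intros simp: field_simps power2_eq_square)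
    then show ?thesis
      unfolding g'_def by (rule field_vector_diff_chain_at[OF assms(3), unfolded o_def])
  qed
  have "Im (g' t) = 0" for t
  proof -
    have "((\<lambda>t. Im (\<i> * (1 + \<phi> t) / (1 - \<phi> t))) has_real_derivative Im (g' t)) (at t)"
      using g_deriv[of t] by (rule has_field_derivative_Im)
    moreover have "(\<lambda>t. Im (\<i> * (1 + \<phi> t) / (1 - \<phi> t))) = (\<lambda>t. 0)"
      using Im_cayley_unit_circle[OF assms(4,5)] by simp
    ultimately show ?thesis
      using DERIV_const DERIV_unique by metis
  qed
  moreover have "\<exists>t. Re (g' t) = 0"
  proof (rule periodic_has_critical_point[OF assms(1)])
    show "((\<lambda>t. Re (\<i> * (1 + \<phi> t) / (1 - \<phi> t))) has_real_derivative Re (g' t)) (at t)" for t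
      using g_deriv[of t] by (rule has_field_derivative_Re)
    show "Re (\<i> * (1 + \<phi> (t + L)) / (1 - \<phi> (t + L))) = Re (\<i> * (1 + \<phi> t) / (1 - \<phi> t))" for t
      unfolding assms(2) ..
  qed
  ultimately obtain t where "g' t = 0"
    by (auto simp: complex_eq_iff)
  then show ?thesis
    using assms(5)[of t] unfolding g'_def by auto
qed

lemma periodic_curve_on_sphere_onto:
  fixes \<gamma> \<gamma>' :: "real \<Rightarrow> complex"
  assumes "L > 0" "\<And>t. \<gamma> (t + L) = \<gamma> t"
    and "\<And>t. (\<gamma> has_vector_derivative \<gamma>' t) (at t)" "\<And>t. \<gamma>' t \<noteq> 0"
    and "range \<gamma> \<subseteq> sphere c r"
  shows "range \<gamma> = sphere c r"
proof (intro equalityI subsetI assms(5)[THEN subsetD])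
  fix q
  assume q: "q \<in> sphere c r"
  show "q \<in> range \<gamma>"
  proof (rule ccontr)
    assume q_missed: "q \<notin> range \<gamma>"
    have "dist c (\<gamma> t) = r" for t
      using assms(5) by (metis mem_sphere rangeI subsetD)
    then have on_circle: "cmod (\<gamma> t - c) = r" for t
      by (metis dist_commute dist_norm)
    have "cmod (q - c) = r"
      using q by (metis dist_commute dist_norm mem_sphere)
    have "q \<noteq> c"
    proof
      assume "q = c"
      then have "\<gamma> 0 = q"
        using on_circle[of 0] \<open>cmod (q - c) = r\<close> by simp
      then show False
        using q_missed by blast
    qed
    then have "r \<noteq> 0"
      using \<open>cmod (q - c) = r\<close> by auto
    define \<phi> where "\<phi> t = (\<gamma> t - c) / (q - c)" for t
    have "\<exists>t. \<gamma>' t / (q - c) = 0"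
    proof (rule periodic_unit_curve_omitting_1_stationary[OF assms(1)])
      show "\<phi> (t + L) = \<phi> t" for t
        unfolding \<phi>_def assms(2) ..
      show "(\<phi> has_vector_derivative \<gamma>' t / (q - c)) (at t)" for t
        unfolding \<phi>_def
        by (intro has_vector_derivative_divide) (simp add: has_vector_derivative_diff_const assms(3))
      show "cmod (\<phi> t) = 1" for t
        unfolding \<phi>_def using on_circle[of t] \<open>cmod (q - c) = r\<close> \<open>r \<noteq> 0\<close>
        by (simp add: norm_divide)
      show "\<phi> t \<noteq> 1" for t
        using q_missed \<open>q \<noteq> c\<close> unfolding \<phi>_def by auto
    qed
    then show False
      using assms(4) \<open>q \<noteq> c\<close> by simp
  qed
qed

lemma Re_mult_cnj_of_real_mult: "Re (z * cnj (of_real k * u)) = k * Re (z * cnj u)"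
  by (simp add: algebra_simps)

lemma has_vector_derivative_reparametrization:
  fixes \<gamma> :: "real \<Rightarrow> complex"
  assumes "\<gamma> differentiable (at (s t))" "(s has_real_derivative d) (at t)"
  shows "((\<lambda>\<tau>. \<gamma> (s \<tau>)) has_vector_derivative
           of_real (d * cmod (vderiv \<gamma> (s t))) * unit_tangent \<gamma> (s t)) (at t)"
proof -
  have "((\<gamma> \<circ> s) has_vector_derivative d *\<^sub>R vderiv \<gamma> (s t)) (at t)"
    using vector_diff_chain_at[OF assms(2)[unfolded has_real_derivative_iff_has_vector_derivative]]
      assms(1) unfolding vderiv_def vector_derivative_works by blast
  moreover have "vderiv \<gamma> (s t) = of_real (cmod (vderiv \<gamma> (s t))) * unit_tangent \<gamma> (s t)"
    unfolding unit_tangent_def by (cases "vderiv \<gamma> (s t) = 0") simp_all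
  ultimately show ?thesis
    by (simp add: o_def scaleR_conv_of_real mult.assoc)
qed

text \<open>After three steps vertex 0 is back at the same point of the curve, having moved forward.\<close>
lemma three_fine_vertex_lap:
  fixes s :: "nat \<Rightarrow> real \<Rightarrow> real"
  assumes "L > 0" "\<forall>t. \<exists>d>0. (s 0 has_real_derivative d) (at t)"
    and "\<forall>j<3. \<forall>t. \<exists>k::int. s j (t + 1) = s ((j + 1) mod 3) t + of_int k * L"
  shows "s 0 0 + L \<le> s 0 3"
proof -
  have succ: "((0::nat) + 1) mod 3 = 1" "((1::nat) + 1) mod 3 = 2" "((2::nat) + 1) mod 3 = 0"
    by simp_all
  obtain k0 :: int where k0: "s 0 (2 + 1) = s 1 2 + of_int k0 * L"
    using assms(3)[rule_format, of 0 2] unfolding succ by auto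
  obtain k1 :: int where k1: "s 1 (1 + 1) = s 2 1 + of_int k1 * L"
    using assms(3)[rule_format, of 1 1] unfolding succ by auto
  obtain k2 :: int where k2: "s 2 (0 + 1) = s 0 0 + of_int k2 * L"
    using assms(3)[rule_format, of 2 0] unfolding succ by auto
  have lap: "s 0 3 = s 0 0 + of_int (k0 + k1 + k2) * L"
    using k0 k1 k2 by (simp add: algebra_simps)
  have "s 0 0 < s 0 3"
    by (rule DERIV_pos_imp_increasing) (use assms(2) in auto)
  then have "k0 + k1 + k2 > 0"
    using lap assms(1) by (simp add: zero_less_mult_iff)
  then show ?thesis
    using lap assms(1) by simp
qed

lemma three_fine_curveE:
  assumes "n_fine_curve 3 \<gamma> L"
  obtains s where "\<And>t. framed_ngon 3 (\<lambda>j. \<gamma> (s j t)) (\<lambda>j. unit_tangent \<gamma> (s j t))"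
    and "\<And>j t. j < 3 \<Longrightarrow> \<exists>d. (s j has_real_derivative d) (at t)"
    and "\<And>t. unit_tangent \<gamma> (s 1 t) \<noteq> unit_tangent \<gamma> (s 0 t)"
    and "s 0 0 + L \<le> s 0 3"
proof -
  obtain s where framed: "\<And>t. framed_ngon 3 (\<lambda>j. \<gamma> (s j t)) (\<lambda>j. unit_tangent \<gamma> (s j t))"
    and speed: "\<forall>j<3. \<forall>t. \<exists>d>0. (s j has_real_derivative d) (at t)"
    and shift: "\<forall>j<3. \<forall>t. \<exists>k::int. s j (t + 1) = s ((j + 1) mod 3) t + of_int k * L"
    and nonparallel: "\<forall>j<3. \<forall>t. \<not> (\<exists>c::real. unit_tangent \<gamma> (s ((j + 1) mod 3) t)
                                   = complex_of_real c * unit_tangent \<gamma> (s j t))"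
    and "L > 0"
    using assms unfolding n_fine_curve_def smooth_closed_regular_curve_def by blast
  have distinct: "unit_tangent \<gamma> (s 1 t) \<noteq> unit_tangent \<gamma> (s 0 t)" for t
  proof
    assume "unit_tangent \<gamma> (s 1 t) = unit_tangent \<gamma> (s 0 t)"
    moreover have "\<not> (\<exists>c::real. unit_tangent \<gamma> (s 1 t) = of_real c * unit_tangent \<gamma> (s 0 t))"
      using nonparallel[rule_format, of 0 t] by simp
    ultimately show False
      by (metis mult_1 of_real_1)
  qed
  moreover have "\<exists>d. (s j has_real_derivative d) (at t)" if "j < 3" for j t
    using speed that by blast
  moreover have "s 0 0 + L \<le> s 0 3"
    using three_fine_vertex_lap[OF \<open>L > 0\<close> _ shift] speed by simp
  ultimately show thesis
    using that[of s] framed by blast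
qed

lemma smooth_closed_regular_curveD:
  assumes "smooth_closed_regular_curve \<gamma> L"
  shows "L > 0" "\<And>t. \<gamma> (t + L) = \<gamma> t" "\<And>t. \<gamma> differentiable (at t)"
    and "\<And>t. (\<gamma> has_vector_derivative vderiv \<gamma> t) (at t)" "\<And>t. vderiv \<gamma> t \<noteq> 0"
proof -
  show "L > 0" "\<And>t. \<gamma> (t + L) = \<gamma> t" "\<And>t. vderiv \<gamma> t \<noteq> 0"
    and diff: "\<And>t. \<gamma> differentiable (at t)"
    using assms unfolding smooth_closed_regular_curve_def by (metis funpow_0)+
  show "(\<gamma> has_vector_derivative vderiv \<gamma> t) (at t)" for t
    using diff unfolding vderiv_def vector_derivative_works .
qed

lemma framed_inscribed_triangle_on_fixed_circle:
  fixes \<gamma> :: "real \<Rightarrow> complex" and s :: "nat \<Rightarrow> real \<Rightarrow> real"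
  assumes framed: "\<And>t. framed_ngon 3 (\<lambda>j. \<gamma> (s j t)) (\<lambda>j. unit_tangent \<gamma> (s j t))"
    and distinct: "\<And>t. unit_tangent \<gamma> (s 1 t) \<noteq> unit_tangent \<gamma> (s 0 t)"
    and differentiable: "\<And>x. \<gamma> differentiable (at x)"
    and speed: "\<And>j t. j < 3 \<Longrightarrow> \<exists>d. (s j has_real_derivative d) (at t)"
  shows "\<exists>c r. r > 0 \<and> (\<forall>t. cmod (\<gamma> (s 0 t) - c) = r)"
proof -
  define B where "B j t = \<gamma> (s j t)" for j t
  have "\<exists>c r. r > 0 \<and> (\<forall>t. cmod (B 0 t - c) = r)"
  proof (rule tangent_triangle_on_fixed_circle)
    show "Im (cnj (B 1 t - B 0 t) * (B 2 t - B 0 t)) \<noteq> 0" for t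
      unfolding B_def using framed_triangle_noncollinear[OF framed distinct] .
    fix j :: nat and t
    assume "j < 3"
    then obtain d where d: "(s j has_real_derivative d) (at t)"
      using speed by blast
    define k where "k = d * cmod (vderiv \<gamma> (s j t))"
    show "\<exists>B'. (B j has_vector_derivative B') (at t) \<and>
        Re ((B j t - circumcenter (B 0 t) (B 1 t) (B 2 t)) * cnj B') = 0"
    proof (intro exI conjI)
      show "(B j has_vector_derivative of_real k * unit_tangent \<gamma> (s j t)) (at t)"
        unfolding B_def k_def by (rule has_vector_derivative_reparametrization[OF differentiable d])
      have "Re ((B j t - circumcenter (B 0 t) (B 1 t) (B 2 t)) * cnj (unit_tangent \<gamma> (s j t))) = 0"
        unfolding B_def by (rule framed_triangle_circumcircle_tangent[OF framed distinct \<open>j < 3\<close>])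
      then show "Re ((B j t - circumcenter (B 0 t) (B 1 t) (B 2 t)) *
          cnj (of_real k * unit_tangent \<gamma> (s j t))) = 0"
        unfolding Re_mult_cnj_of_real_mult by simp
    qed
  qed
  then show ?thesis
    unfolding B_def .
qed

theorem proposition6p1:
  fixes \<gamma> :: "real \<Rightarrow> complex" and L :: real
  assumes "n_fine_curve 3 \<gamma> L"
  shows "\<exists>c r. r > 0 \<and> range \<gamma> = sphere c r"
proof -
  obtain s where framed: "\<And>t. framed_ngon 3 (\<lambda>j. \<gamma> (s j t)) (\<lambda>j. unit_tangent \<gamma> (s j t))"
    and speed: "\<And>j t. j < 3 \<Longrightarrow> \<exists>d. (s j has_real_derivative d) (at t)"
    and distinct: "\<And>t. unit_tangent \<gamma> (s 1 t) \<noteq> unit_tangent \<gamma> (s 0 t)"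
    and lap: "s 0 0 + L \<le> s 0 3"
    using three_fine_curveE[OF assms] by blast
  have curve: "smooth_closed_regular_curve \<gamma> L"
    using assms unfolding n_fine_curve_def by blast
  note curveD = smooth_closed_regular_curveD[OF curve]
  obtain c r where "r > 0" and on_circle: "\<And>t. cmod (\<gamma> (s 0 t) - c) = r"
    using framed_inscribed_triangle_on_fixed_circle[where s = s, OF framed distinct curveD(3) speed]
    by blast
  have "isCont (s 0) t" for t
    using speed[of 0 t] DERIV_isCont by auto
  then have "continuous_on {0..3} (s 0)"
    by (simp add: continuous_at_imp_continuous_on)
  then have "range \<gamma> \<subseteq> (\<lambda>\<tau>. \<gamma> (s 0 \<tau>)) ` {0..3}"
    using periodic_range_subset_image[where \<gamma> = \<gamma> and L = L and f = "s 0" and a = 0 and b = 3]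
      curveD(1,2) lap by simp
  also have "\<dots> \<subseteq> sphere c r"
    using on_circle by (auto simp: dist_norm norm_minus_commute)
  finally have "range \<gamma> = sphere c r"
    by (rule periodic_curve_on_sphere_onto[where \<gamma> = \<gamma> and L = L, OF curveD(1,2,4,5)])
  then show ?thesis
    using \<open>r > 0\<close> by blast
qed

end
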